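(* Let $\mathcal{B}=(v_1,\dots,v_N)$ with $v_1,\dots,v_N$ independent and uniform in $\mathbb{F}_2^n$. For $k\in\{1,\dots,n\}$ let $C^k\in\mathbb{F}_2^N$ be the $k$-th column, $C^k_j=(v_j)_k$, and define the equivalence relation $k\sim_{\mathcal B}j$ iff $C^k=C^j$ or $C^k=1-C^j$ (componentwise complement). Let $|I|$ be the number of equivalence classes of $\sim_{\mathcal B}$ on $\{1,\dots,n\}$. Then for $i=1,\dots,n$, $$\mathbb{P}(|I|=i)=\frac{1}{2^{(N-1)(n-i)}}\sum_{(n_1,\dots,n_i)\in S^i_{n-i}}\ \prod_{j=1}^i j^{n_j}\left(1-\frac{j-1}{2^{N-1}}\right),$$ where $S^i_m=\{(n_1,\dots,n_i)\in\mathbb{Z}^i: n_k\ge0,\ \sum_{j=1}^i n_j=m\}$. *)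

theory Defs
  imports "HOL-Probability.Probability"
begin

text \<open>A family B = (v_1,...,v_N) of vectors in F_2^n is modelled as a function
  B :: nat => nat => bool with B j k = (v_j)_k for j in {1..N}, k in {1..n}
  (bool standing for F_2), extensional outside these index ranges.\<close>

definition rand_family :: "nat \<Rightarrow> nat \<Rightarrow> (nat \<Rightarrow> nat \<Rightarrow> bool) pmf" where
  "rand_family N n = Pi_pmf {1..N} undefined (\<lambda>_. pmf_of_set (PiE {1..n} (\<lambda>_. UNIV)))"

definition col :: "nat \<Rightarrow> (nat \<Rightarrow> nat \<Rightarrow> bool) \<Rightarrow> nat \<Rightarrow> nat \<Rightarrow> bool" where
  "col N B k = (\<lambda>j. if j \<in> {1..N} then B j k else undefined)"

definition col_rel :: "nat \<Rightarrow> nat \<Rightarrow> (nat \<Rightarrow> nat \<Rightarrow> bool) \<Rightarrow> (nat \<times> nat) set" where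
  "col_rel N n B = {(k, j). k \<in> {1..n} \<and> j \<in> {1..n} \<and>
      (col N B k = col N B j \<or> (\<forall>l\<in>{1..N}. col N B k l = (\<not> col N B j l)))}"

definition num_classes :: "nat \<Rightarrow> nat \<Rightarrow> (nat \<Rightarrow> nat \<Rightarrow> bool) \<Rightarrow> nat" where
  "num_classes N n B = card ({1..n} // col_rel N n B)"

text \<open>S^i_m as lists (n_1,...,n_i) of naturals (nonnegativity automatic) summing to m.\<close>
definition S_set :: "nat \<Rightarrow> nat \<Rightarrow> nat list set" where
  "S_set i m = {ns. length ns = i \<and> sum_list ns = m}"

end

theory Submission
  imports Defs "HOL-Combinatorics.Stirling"
begin

(* Transposing B, the columns C^1, ..., C^n are independent and uniform in F_2^N, and
   k ~_B j holds iff C^k and C^j lie in the same antipodal pair {C, 1 - C}.  Each of the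
   M = 2^(N-1) antipodal pairs contains exactly two vectors, so |I| is distributed as the
   number of distinct values among n independent uniform draws from an M-element set.
   Adding one point of the domain at a time shows that S(n,i) M (M-1) ... (M-i+1) maps
   from an n-set to an M-set have an image of size i, S the Stirling numbers of the
   second kind.  Finally, the sum over S^i_(n-i) is the complete homogeneous symmetric
   polynomial h_(n-i)(1,...,i), which equals S(n,i) by the same recursion. *)

section \<open>Stirling numbers and the sets S^i_m\<close>

lemma Stirling_Suc_eq_sum:
  "Stirling (m + Suc i) (Suc i) = (\<Sum>a\<le>m. Stirling (m - a + i) i * Suc i ^ a)"
proof (induction m)
  case 0
  then show ?case by simp
next
  case (Suc m)
  have "(\<Sum>a\<le>Suc m. Stirling (Suc m - a + i) i * Suc i ^ a)
      = Stirling (Suc m + i) i + Suc i * (\<Sum>a\<le>m. Stirling (m - a + i) i * Suc i ^ a)"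
    by (subst sum.atMost_Suc_shift) (simp add: sum_distrib_left algebra_simps del: Stirling.simps sum.atMost_Suc)
  also have "\<dots> = Stirling (Suc m + Suc i) (Suc i)"
    by (simp only: Suc.IH[symmetric]) simp
  finally show ?case ..
qed

lemma S_set_0: "S_set 0 m = (if m = 0 then {[]} else {})"
  by (auto simp: S_set_def)

lemma S_set_Suc: "S_set (Suc i) m = (\<lambda>(a, xs). xs @ [a]) ` (SIGMA a:{..m}. S_set i (m - a))"
proof
  show "S_set (Suc i) m \<subseteq> (\<lambda>(a, xs). xs @ [a]) ` (SIGMA a:{..m}. S_set i (m - a))"
  proof
    fix ns assume "ns \<in> S_set (Suc i) m"
    then have ns: "length ns = Suc i" "sum_list ns = m"
      by (simp_all add: S_set_def)
    then obtain xs a where xs: "ns = xs @ [a]" "length xs = i"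
      by (auto simp: length_Suc_conv_rev)
    with ns have "(a, xs) \<in> (SIGMA a:{..m}. S_set i (m - a))"
      by (auto simp: S_set_def)
    then show "ns \<in> (\<lambda>(a, xs). xs @ [a]) ` (SIGMA a:{..m}. S_set i (m - a))"
      using xs by force
  qed
qed (auto simp: S_set_def)

lemma finite_S_set: "finite (S_set i m)"
proof (rule finite_subset)
  show "S_set i m \<subseteq> {xs. set xs \<subseteq> {..m} \<and> length xs = i}"
    by (auto simp: S_set_def member_le_sum_list)
qed (simp add: finite_lists_length_eq)

lemma prod_snoc_nth:
  assumes "length xs = i"
  shows "(\<Prod>j=1..Suc i. f j ((xs @ [a]) ! (j - 1))) = (\<Prod>j=1..i. f j (xs ! (j - 1))) * f (Suc i) a"
proof -
  have "(\<Prod>j=1..i. f j ((xs @ [a]) ! (j - 1))) = (\<Prod>j=1..i. f j (xs ! (j - 1)))"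
    using assms by (intro prod.cong) (auto simp: nth_append)
  then show ?thesis
    using assms by (simp add: nth_append)
qed

lemma sum_S_set_prod_power_eq_Stirling:
  "(\<Sum>ns\<in>S_set i m. \<Prod>j=1..i. j ^ (ns ! (j - 1))) = Stirling (m + i) i"
proof (induction i arbitrary: m)
  case 0
  then show ?case by (cases m) (simp_all add: S_set_0)
next
  case (Suc i)
  have snoc_inj: "inj_on (\<lambda>(a, xs). xs @ [a]) X" for X :: "(nat \<times> nat list) set"
    by (auto simp: inj_on_def)
  have "(\<Sum>ns\<in>S_set (Suc i) m. \<Prod>j=1..Suc i. j ^ (ns ! (j - 1)))
      = (\<Sum>(a, xs)\<in>(SIGMA a:{..m}. S_set i (m - a)). \<Prod>j=1..Suc i. j ^ ((xs @ [a]) ! (j - 1)))"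
    unfolding S_set_Suc sum.reindex[OF snoc_inj] by (simp only: case_prod_unfold comp_def)
  also have "\<dots> = (\<Sum>a\<le>m. \<Sum>xs\<in>S_set i (m - a). \<Prod>j=1..Suc i. j ^ ((xs @ [a]) ! (j - 1)))"
    by (rule sum.Sigma[symmetric]) (simp_all add: finite_S_set)
  also have "\<dots> = (\<Sum>a\<le>m. \<Sum>xs\<in>S_set i (m - a). (\<Prod>j=1..i. j ^ (xs ! (j - 1))) * Suc i ^ a)"
    by (intro sum.cong refl, rule prod_snoc_nth[where f = "\<lambda>j e. j ^ e"]) (simp add: S_set_def)
  also have "\<dots> = (\<Sum>a\<le>m. Stirling (m - a + i) i * Suc i ^ a)"
    by (intro sum.cong refl) (simp only: Suc.IH sum_distrib_right[symmetric])
  also have "\<dots> = Stirling (m + Suc i) (Suc i)"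
    by (rule Stirling_Suc_eq_sum[symmetric])
  finally show ?case .
qed

lemma sum_S_set_prod_eq_Stirling:
  "(\<Sum>ns\<in>S_set i m. \<Prod>j=1..i. real j ^ (ns ! (j - 1)) * c j)
    = real (Stirling (m + i) i) * (\<Prod>j=1..i. c j)"
proof -
  have "(\<Sum>ns\<in>S_set i m. \<Prod>j=1..i. real j ^ (ns ! (j - 1)) * c j)
      = real (\<Sum>ns\<in>S_set i m. \<Prod>j=1..i. j ^ (ns ! (j - 1))) * (\<Prod>j=1..i. c j)"
    by (simp add: prod.distrib sum_distrib_right)
  then show ?thesis
    by (simp only: sum_S_set_prod_power_eq_Stirling)
qed

lemma prod_one_minus_div_eq:
  assumes "0 < M"
  shows "(\<Prod>j=1..i. 1 - (real j - 1) / real M) = real (\<Prod>j<i. M - j) / real M ^ i"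
proof (cases "i \<le> M")
  case True
  have "(\<Prod>j=1..i. 1 - (real j - 1) / real M) = (\<Prod>j<i. 1 - real j / real M)"
    by (simp add: prod.atLeast1_atMost_eq)
  also have "\<dots> = (\<Prod>j<i. real (M - j) / real M)"
    using True assms by (intro prod.cong refl) (simp add: diff_divide_distrib)
  finally show ?thesis
    by (simp add: prod_dividef)
next
  case False
  have "(\<Prod>j=1..i. 1 - (real j - 1) / real M) = 0"
    using False assms by (intro prod_zero) (auto intro!: bexI[where x = "Suc M"])
  moreover have "(\<Prod>j<i. M - j) = 0"
    using False by (intro prod_zero) auto
  ultimately show ?thesis
    by (simp only: of_nat_0 div_0)
qed

section \<open>Counting maps by the size of their image\<close>

lemma card_filter_card_insert_Suc:
  assumes "finite Y" and "S \<subseteq> Y"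
  shows "card {y \<in> Y. card (insert y S) = Suc k} =
    (if card S = Suc k then Suc k else 0) + (if card S = k then card Y - k else 0)"
proof -
  have "finite S"
    using assms finite_subset by blast
  then have card_insert: "card (insert y S) = (if y \<in> S then card S else Suc (card S))" for y
    by (simp add: card_insert_if)
  consider "card S = Suc k" | "card S = k" | "card S \<noteq> Suc k" "card S \<noteq> k"
    by blast
  then show ?thesis
  proof cases
    case 1
    then have "{y \<in> Y. card (insert y S) = Suc k} = S"
      using assms(2) by (auto simp: card_insert)
    then show ?thesis using 1 by simp
  next
    case 2
    then have "{y \<in> Y. card (insert y S) = Suc k} = Y - S"
      by (auto simp: card_insert)
    then show ?thesis
      using 2 assms \<open>finite S\<close> by (simp add: card_Diff_subset)
  next
    case 3
    then have no_solution: "{y \<in> Y. card (insert y S) = Suc k} = {}"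
      by (auto simp: card_insert)
    show ?thesis
      using 3 by (simp add: no_solution)
  qed
qed

lemma card_PiE_insert_filter:
  assumes "a \<notin> A" and "finite A" and "finite (T a)" and "\<And>x. x \<in> A \<Longrightarrow> finite (T x)"
  shows "card {f \<in> PiE (insert a A) T. P f} = (\<Sum>g\<in>PiE A T. card {y \<in> T a. P (g(a := y))})"
proof -
  let ?upd = "\<lambda>(g, y). g(a := y)"
  let ?\<Sigma> = "SIGMA g:PiE A T. {y \<in> T a. P (g(a := y))}"
  have "inj_on ?upd (PiE A T \<times> T a)"
    using inj_combinator[OF assms(1), of T]
    by (auto simp: inj_on_def)
  then have inj: "inj_on ?upd ?\<Sigma>"
    by (rule inj_on_subset) auto
  have "{f \<in> PiE (insert a A) T. P f} = ?upd ` ?\<Sigma>"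
    by (auto simp: PiE_insert_eq PiE_fun_upd)
  then have "card {f \<in> PiE (insert a A) T. P f} = card ?\<Sigma>"
    by (simp add: card_image[OF inj])
  also have "\<dots> = (\<Sum>g\<in>PiE A T. card {y \<in> T a. P (g(a := y))})"
    using assms by (simp add: finite_PiE)
  finally show ?thesis .
qed

lemma card_PiE_card_image_eq:
  assumes "finite A" and "finite Y"
  shows "card {f \<in> PiE A (\<lambda>_. Y). card (f ` A) = k} = Stirling (card A) k * (\<Prod>j<k. card Y - j)"
  using assms(1)
proof (induction A arbitrary: k rule: finite_induct)
  case empty
  then show ?case by (cases k) auto
next
  case (insert a A)
  show ?case
  proof (cases k)
    case 0
    then show ?thesis
      using insert.hyps by simp
  next
    case (Suc k)
    let ?c = "\<lambda>k. card {g \<in> PiE A (\<lambda>_. Y). card (g ` A) = k}"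
    have image_upd: "g(a := y) ` insert a A = insert y (g ` A)" for g :: "'a \<Rightarrow> 'b" and y
      using insert.hyps(2) by auto
    have "card {f \<in> PiE (insert a A) (\<lambda>_. Y). card (f ` insert a A) = Suc k}
        = (\<Sum>g\<in>PiE A (\<lambda>_. Y). card {y \<in> Y. card (g(a := y) ` insert a A) = Suc k})"
      using insert.hyps assms(2) by (intro card_PiE_insert_filter) auto
    also have "\<dots> = (\<Sum>g\<in>PiE A (\<lambda>_. Y). card {y \<in> Y. card (insert y (g ` A)) = Suc k})"
      by (simp only: image_upd)
    also have "\<dots> = (\<Sum>g\<in>PiE A (\<lambda>_. Y).
        (if card (g ` A) = Suc k then Suc k else 0) + (if card (g ` A) = k then card Y - k else 0))"
      using assms(2) by (intro sum.cong refl card_filter_card_insert_Suc) (auto simp: PiE_iff)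
    also have "\<dots> = Suc k * ?c (Suc k) + (card Y - k) * ?c k"
      using insert.hyps(1) by (simp add: sum.distrib sum.inter_filter[symmetric] finite_PiE assms(2))
    also have "\<dots> = (Suc k * Stirling (card A) (Suc k) + Stirling (card A) k) * (\<Prod>j<Suc k. card Y - j)"
      by (simp add: insert.IH algebra_simps)
    also have "\<dots> = Stirling (card (insert a A)) (Suc k) * (\<Prod>j<Suc k. card Y - j)"
      using insert.hyps by simp
    finally show ?thesis
      using Suc by simp
  qed
qed

lemma card_PiE_filter_comp_fibres:
  assumes "finite A" and "finite V" and "g ` V = Y"
    and fibre: "\<And>y. y \<in> Y \<Longrightarrow> card {v \<in> V. g v = y} = d"
  shows "card {f \<in> PiE A (\<lambda>_. V). P (\<lambda>x\<in>A. g (f x))} = d ^ card A * card {h \<in> PiE A (\<lambda>_. Y). P h}"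
proof -
  let ?H = "{h \<in> PiE A (\<lambda>_. Y). P h}"
  let ?F = "\<lambda>h. PiE A (\<lambda>x. {v \<in> V. g v = h x})"
  have fibre_eq: "f \<in> ?F h \<longleftrightarrow> f \<in> PiE A (\<lambda>_. V) \<and> (\<lambda>x\<in>A. g (f x)) = h"
    if "h \<in> PiE A (\<lambda>_. Y)" for f h
    using that by (auto simp: PiE_iff extensional_def)
  have "{f \<in> PiE A (\<lambda>_. V). P (\<lambda>x\<in>A. g (f x))} = (\<Union>h\<in>?H. ?F h)"
  proof (intro equalityI subsetI)
    fix f assume f: "f \<in> {f \<in> PiE A (\<lambda>_. V). P (\<lambda>x\<in>A. g (f x))}"
    then have "(\<lambda>x\<in>A. g (f x)) \<in> ?H"
      using assms(3) by (auto simp: PiE_iff)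
    moreover have "f \<in> ?F (\<lambda>x\<in>A. g (f x))"
      using f by (auto simp: PiE_iff)
    ultimately show "f \<in> (\<Union>h\<in>?H. ?F h)"
      by blast
  next
    fix f assume "f \<in> (\<Union>h\<in>?H. ?F h)"
    then obtain h where "h \<in> ?H" and "f \<in> ?F h"
      by (rule UN_E)
    then show "f \<in> {f \<in> PiE A (\<lambda>_. V). P (\<lambda>x\<in>A. g (f x))}"
      by (simp add: fibre_eq)
  qed
  moreover have "card (?F h) = d ^ card A" if "h \<in> ?H" for h
    using that assms(1) by (simp add: card_PiE fibre PiE_iff)
  moreover have "finite ?H"
    using assms(1,2,3) by (auto simp: finite_PiE)
  moreover have "?F h \<inter> ?F h' = {}" if "h \<in> ?H" "h' \<in> ?H" "h \<noteq> h'" for h h'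
  proof -
    have "(\<lambda>x\<in>A. g (f x)) = h" and "(\<lambda>x\<in>A. g (f x)) = h'" if "f \<in> ?F h" and "f \<in> ?F h'" for f
      using that fibre_eq \<open>h \<in> ?H\<close> \<open>h' \<in> ?H\<close> by simp_all
    then show ?thesis
      using \<open>h \<noteq> h'\<close> by blast
  qed
  ultimately show ?thesis
    using assms(1,2) by (simp add: card_UN_disjoint finite_PiE)
qed

lemma card_quotient_kernel:
  "card (A // {(x, y). x \<in> A \<and> y \<in> A \<and> f x = f y}) = card (f ` A)"
proof -
  let ?R = "{(x, y). x \<in> A \<and> y \<in> A \<and> f x = f y}"
  let ?class = "\<lambda>z. {x \<in> A. f x = z}"
  have "?R `` {x} = ?class (f x)" if "x \<in> A" for x
    using that by auto
  then have "A // ?R = ?class ` f ` A"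
    unfolding quotient_def by (auto simp: image_image)
  moreover have "inj_on ?class (f ` A)"
    by (auto simp: inj_on_def)
  ultimately show ?thesis
    by (simp add: card_image)
qed

section \<open>Antipodal pairs in F_2^N\<close>

definition compl_vec :: "nat \<Rightarrow> (nat \<Rightarrow> bool) \<Rightarrow> nat \<Rightarrow> bool" where
  "compl_vec N v = (\<lambda>l\<in>{1..N}. \<not> v l)"

definition antipodal_pair :: "nat \<Rightarrow> (nat \<Rightarrow> bool) \<Rightarrow> (nat \<Rightarrow> bool) set" where
  "antipodal_pair N v = {v, compl_vec N v}"

lemma compl_vec_in_PiE: "compl_vec N v \<in> PiE {1..N} (\<lambda>_. UNIV)"
  by (simp add: compl_vec_def)

lemma compl_vec_eq_iff:
  "u \<in> PiE {1..N} (\<lambda>_. UNIV) \<Longrightarrow> u = compl_vec N v \<longleftrightarrow> (\<forall>l\<in>{1..N}. u l = (\<not> v l))"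
  by (auto simp: compl_vec_def fun_eq_iff PiE_iff extensional_def)

lemma compl_vec_compl_vec: "v \<in> PiE {1..N} (\<lambda>_. UNIV) \<Longrightarrow> compl_vec N (compl_vec N v) = v"
  by (auto simp: compl_vec_def fun_eq_iff PiE_iff extensional_def)

lemma compl_vec_neq: "1 \<le> N \<Longrightarrow> compl_vec N v \<noteq> v"
  by (auto simp: compl_vec_def fun_eq_iff intro!: exI[where x = 1])

lemma antipodal_pair_eq_iff:
  assumes "u \<in> PiE {1..N} (\<lambda>_. UNIV)" and "v \<in> PiE {1..N} (\<lambda>_. UNIV)"
  shows "antipodal_pair N u = antipodal_pair N v \<longleftrightarrow> u = v \<or> u = compl_vec N v"
  using assms by (auto simp: antipodal_pair_def doubleton_eq_iff compl_vec_compl_vec)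

lemma card_antipodal_pair: "1 \<le> N \<Longrightarrow> card (antipodal_pair N v) = 2"
  using compl_vec_neq[of N v] by (auto simp: antipodal_pair_def card_insert_if)

lemma antipodal_pair_of_mem:
  assumes "u \<in> PiE {1..N} (\<lambda>_. UNIV)" and "w \<in> antipodal_pair N u"
  shows "antipodal_pair N w = antipodal_pair N u"
  using assms by (auto simp: antipodal_pair_def compl_vec_compl_vec)

lemma antipodal_pair_fibre:
  assumes "u \<in> PiE {1..N} (\<lambda>_. UNIV)"
  shows "{v \<in> PiE {1..N} (\<lambda>_. UNIV). antipodal_pair N v = antipodal_pair N u} = antipodal_pair N u"
proof (intro equalityI subsetI)
  fix v assume "v \<in> {v \<in> PiE {1..N} (\<lambda>_. UNIV). antipodal_pair N v = antipodal_pair N u}"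
  then have "antipodal_pair N v = antipodal_pair N u"
    by simp
  moreover have "v \<in> antipodal_pair N v"
    by (simp add: antipodal_pair_def)
  ultimately show "v \<in> antipodal_pair N u"
    by simp
next
  fix w assume w: "w \<in> antipodal_pair N u"
  then have "w \<in> PiE {1..N} (\<lambda>_. UNIV)"
    using assms compl_vec_in_PiE by (auto simp: antipodal_pair_def)
  moreover have "antipodal_pair N w = antipodal_pair N u"
    using antipodal_pair_of_mem[OF assms w] .
  ultimately show "w \<in> {v \<in> PiE {1..N} (\<lambda>_. UNIV). antipodal_pair N v = antipodal_pair N u}"
    by simp
qed

lemma card_antipodal_pair_fibre:
  assumes "1 \<le> N" and "p \<in> antipodal_pair N ` PiE {1..N} (\<lambda>_. UNIV)"
  shows "card {v \<in> PiE {1..N} (\<lambda>_. UNIV). antipodal_pair N v = p} = 2"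
  using assms antipodal_pair_fibre card_antipodal_pair by auto

lemma card_antipodal_pairs:
  assumes "1 \<le> N"
  shows "card (antipodal_pair N ` PiE {1..N} (\<lambda>_. UNIV)) = 2 ^ (N - 1)"
proof -
  let ?V = "PiE {1..N} (\<lambda>_. UNIV :: bool set)"
  let ?P = "antipodal_pair N ` ?V"
  have "\<Union>?P = ?V"
    unfolding antipodal_pair_def using compl_vec_in_PiE by blast
  moreover have "card p = 2" if "p \<in> ?P" for p
    using that by (auto simp: card_antipodal_pair[OF assms])
  moreover have "p \<inter> q = {}" if "p \<in> ?P" and "q \<in> ?P" and "p \<noteq> q" for p q
    using that antipodal_pair_of_mem by (metis disjoint_iff imageE)
  ultimately have "2 * card ?P = card ?V"
    using card_partition[of ?P 2] by (simp add: finite_PiE)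
  also have "\<dots> = 2 * 2 ^ (N - 1)"
    using assms by (simp add: card_PiE flip: power_Suc)
  finally show ?thesis
    by simp
qed

section \<open>Columns of a random family\<close>

lemma col_in_PiE: "col N B k \<in> PiE {1..N} (\<lambda>_. UNIV)"
proof -
  have "col N B k = (\<lambda>j\<in>{1..N}. B j k)"
    by (simp add: col_def restrict_def)
  then show ?thesis
    by simp
qed

lemma num_classes_eq_card_antipodal_pairs:
  "num_classes N n B = card (antipodal_pair N ` col N B ` {1..n})"
proof -
  have "(col N B k = col N B j \<or> (\<forall>l\<in>{1..N}. col N B k l = (\<not> col N B j l)))
      \<longleftrightarrow> antipodal_pair N (col N B k) = antipodal_pair N (col N B j)" for k j
    by (simp only: antipodal_pair_eq_iff[OF col_in_PiE col_in_PiE] compl_vec_eq_iff[OF col_in_PiE])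
  then have "col_rel N n B = {(k, j). k \<in> {1..n} \<and> j \<in> {1..n} \<and>
      antipodal_pair N (col N B k) = antipodal_pair N (col N B j)}"
    unfolding col_rel_def by (simp only:)
  then have "num_classes N n B = card ({1..n} // {(k, j). k \<in> {1..n} \<and> j \<in> {1..n} \<and>
      antipodal_pair N (col N B k) = antipodal_pair N (col N B j)})"
    by (simp only: num_classes_def)
  also have "\<dots> = card ((\<lambda>k. antipodal_pair N (col N B k)) ` {1..n})"
    by (rule card_quotient_kernel)
  finally show ?thesis
    by (simp only: image_image)
qed

definition columns :: "nat \<Rightarrow> nat \<Rightarrow> (nat \<Rightarrow> nat \<Rightarrow> bool) \<Rightarrow> nat \<Rightarrow> nat \<Rightarrow> bool" where
  "columns N n B = (\<lambda>k\<in>{1..n}. col N B k)"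

lemma bij_betw_columns:
  "bij_betw (columns N n) (PiE {1..N} (\<lambda>_. PiE {1..n} (\<lambda>_. UNIV)))
    (PiE {1..n} (\<lambda>_. PiE {1..N} (\<lambda>_. UNIV)))"
  by (rule bij_betw_byWitness[where f' = "\<lambda>C. \<lambda>j\<in>{1..N}. \<lambda>k\<in>{1..n}. C k j"])
    (auto simp: columns_def col_def fun_eq_iff PiE_iff extensional_def)

lemma PiE_dflt_undefined: "PiE_dflt A undefined B = PiE A B"
  by (auto simp: PiE_dflt_def PiE_def extensional_def Pi_def)

lemma rand_family_eq_pmf_of_set:
  "rand_family N n = pmf_of_set (PiE {1..N} (\<lambda>_. PiE {1..n} (\<lambda>_. UNIV)))"
  unfolding rand_family_def by (subst Pi_pmf_of_set) (auto simp: finite_PiE PiE_dflt_undefined)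

lemma card_num_classes_eq:
  assumes "1 \<le> N"
  shows "card {B \<in> PiE {1..N} (\<lambda>_. PiE {1..n} (\<lambda>_. UNIV)). num_classes N n B = i}
    = 2 ^ n * (Stirling n i * (\<Prod>j<i. 2 ^ (N - 1) - j))"
proof -
  let ?V = "PiE {1..N} (\<lambda>_. UNIV :: bool set)"
  let ?Y = "antipodal_pair N ` ?V"
  have "card {B \<in> PiE {1..N} (\<lambda>_. PiE {1..n} (\<lambda>_. UNIV)). num_classes N n B = i}
      = card {C \<in> PiE {1..n} (\<lambda>_. ?V). card (antipodal_pair N ` C ` {1..n}) = i}"
  proof (rule bij_betw_same_card, rule bij_betw_Collect[OF bij_betw_columns])
    fix B
    have "columns N n B ` {1..n} = col N B ` {1..n}"
      by (simp add: columns_def)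
    then show "card (antipodal_pair N ` columns N n B ` {1..n}) = i \<longleftrightarrow> num_classes N n B = i"
      by (simp only: num_classes_eq_card_antipodal_pairs)
  qed
  also have "\<dots> = card {C \<in> PiE {1..n} (\<lambda>_. ?V).
      card ((\<lambda>k\<in>{1..n}. antipodal_pair N (C k)) ` {1..n}) = i}"
    by (simp add: image_image)
  also have "\<dots> = 2 ^ card {1..n} * card {h \<in> PiE {1..n} (\<lambda>_. ?Y). card (h ` {1..n}) = i}"
    by (rule card_PiE_filter_comp_fibres[OF _ _ refl card_antipodal_pair_fibre[OF assms]])
      (simp_all add: finite_PiE)
  also have "\<dots> = 2 ^ n * (Stirling n i * (\<Prod>j<i. card ?Y - j))"
    by (simp add: card_PiE_card_image_eq finite_PiE)
  finally show ?thesis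
    by (simp only: card_antipodal_pairs[OF assms])
qed

lemma prob_num_classes_eq:
  assumes "1 \<le> N"
  shows "measure_pmf.prob (rand_family N n) {B. num_classes N n B = i}
    = real (Stirling n i) * real (\<Prod>j<i. 2 ^ (N - 1) - j) / 2 ^ ((N - 1) * n)"
proof -
  let ?\<Omega> = "PiE {1..N} (\<lambda>_. PiE {1..n} (\<lambda>_. UNIV :: bool set))"
  have "measure_pmf.prob (rand_family N n) {B. num_classes N n B = i}
      = real (card {B \<in> ?\<Omega>. num_classes N n B = i}) / real (card ?\<Omega>)"
    by (simp add: rand_family_eq_pmf_of_set measure_pmf_of_set finite_PiE PiE_eq_empty_iff Int_def)
  moreover have "card ?\<Omega> = 2 ^ n * 2 ^ ((N - 1) * n)"
  proof -
    have "card ?\<Omega> = 2 ^ (n * N)"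
      by (simp add: card_PiE power_mult)
    also have "n * N = n + (N - 1) * n"
      using assms by (cases N) auto
    finally show ?thesis
      by (simp add: power_add)
  qed
  ultimately show ?thesis
    using card_num_classes_eq[OF assms, of n i] by simp
qed

theorem theorem8p5:
  fixes N n i :: nat
  assumes "N \<ge> 1" and "1 \<le> i" and "i \<le> n"
  shows "measure_pmf.prob (rand_family N n) {B. num_classes N n B = i} =
    (1 / 2 ^ ((N - 1) * (n - i))) *
    (\<Sum>ns\<in>S_set i (n - i). \<Prod>j=1..i.
        real j ^ (ns ! (j - 1)) * (1 - (real j - 1) / 2 ^ (N - 1)))"
proof -
  let ?M = "2 ^ (N - 1) :: nat"
  have "measure_pmf.prob (rand_family N n) {B. num_classes N n B = i}
      = real (Stirling n i) * (real (\<Prod>j<i. ?M - j) / real ?M ^ i) / real ?M ^ (n - i)"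
    using prob_num_classes_eq[OF assms(1)] assms(3)
    by (simp add: power_mult power_add[symmetric])
  also have "\<dots> = (1 / 2 ^ ((N - 1) * (n - i))) *
      (real (Stirling (n - i + i) i) * (\<Prod>j=1..i. 1 - (real j - 1) / real ?M))"
    using assms(3) prod_one_minus_div_eq[of ?M i] by (simp add: power_mult)
  also have "\<dots> = (1 / 2 ^ ((N - 1) * (n - i))) *
      (\<Sum>ns\<in>S_set i (n - i). \<Prod>j=1..i. real j ^ (ns ! (j - 1)) * (1 - (real j - 1) / real ?M))"
    by (simp only: sum_S_set_prod_eq_Stirling)
  finally show ?thesis
    by simp
qed

end
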